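(* Let $K$ be the cycle Kirchhoff–Symanzik matrix and ${*K}$ the cocycle Kirchhoff–Symanzik matrix. Then every eigenvalue of $K$ and of ${*K}$ is $\ge 1$. Moreover, for every $\lambda>1$, $\lambda$ is an eigenvalue of $K$ if and only if it is an eigenvalue of ${*K}$, with the same multiplicity. Consequently the multiplicities $m_K(1)$, $m_{*K}(1)$ of the eigenvalue $1$ satisfy $m_K(1)-m_{*K}(1)=(|E|-|V|+1)-(|V|-1)$; in particular if $|E|=2|V|-2$ then $K$ and ${*K}$ have the same spectrum with multiplicities and are similar.
   Context: Setup. Let $G=(V,E)$ be a finite connected graph with oriented edges (loops and multiple edges allowed), with edge space $\mathbb{R}^{E}$ carrying the Euclidean inner product $\langle\cdot,\cdot\rangle$, each edge identified with its standard basis vector. Fix a spanning tree $T\subseteq E$ of the underlying undirected graph. Edges in $T$ are cochords $e_\mu$, $\mu=1,\dots,|V|-1$; edges not in $T$ are chords $e_\alpha$, $\alpha=|V|,\dots,|E|$. For a chord $e_\alpha$, $T\cup\{e_\alpha\}$ contains a unique cycle; $c_\alpha\in\mathbb{R}^E$ has entry $+1$ (resp. $-1$) on each edge of this cycle whose orientation agrees (resp. disagrees) with traversal of the cycle in the direction of $e_\alpha$, and $0$ elsewhere. For a cochord $e_\mu$, $T\setminus\{e_\mu\}$ has two components; let $S_\mu$ be the vertex set of the component containing the tail of $e_\mu$; $c_\mu\in\mathbb{R}^E$ has entry $+1$ on edges with tail in $S_\mu$ and head not in $S_\mu$, $-1$ on edges with head in $S_\mu$ and tail not in $S_\mu$,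 and $0$ elsewhere. The cycle Kirchhoff–Symanzik (KS) matrix is the $(|E|-|V|+1)\times(|E|-|V|+1)$ Gram matrix $K=(\langle c_\alpha,c_{\alpha'}\rangle)_{\alpha,\alpha'}$; the cocycle KS matrix is the $(|V|-1)\times(|V|-1)$ Gram matrix ${*K}=(\langle c_\mu,c_{\mu'}\rangle)_{\mu,\mu'}$. *)

theory Defs
  imports "Jordan_Normal_Form.Char_Poly" "Jordan_Normal_Form.Matrix"
begin

definition graph :: "'v set \<Rightarrow> 'e set \<Rightarrow> ('e \<Rightarrow> 'v) \<Rightarrow> ('e \<Rightarrow> 'v) \<Rightarrow> bool" where
  "graph V E tail head \<longleftrightarrow> finite V \<and> V \<noteq> {} \<and> finite E \<and> (\<forall>e\<in>E. tail e \<in> V \<and> head e \<in> V)"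

definition adj :: "'e set \<Rightarrow> ('e \<Rightarrow> 'v) \<Rightarrow> ('e \<Rightarrow> 'v) \<Rightarrow> ('v \<times> 'v) set" where
  "adj F tail head = {(tail e, head e) | e. e \<in> F} \<union> {(head e, tail e) | e. e \<in> F}"

definition connected_on :: "'v set \<Rightarrow> 'e set \<Rightarrow> ('e \<Rightarrow> 'v) \<Rightarrow> ('e \<Rightarrow> 'v) \<Rightarrow> bool" where
  "connected_on V F tail head \<longleftrightarrow> (\<forall>u\<in>V. \<forall>v\<in>V. (u, v) \<in> (adj F tail head)\<^sup>*)"

definition spanning_tree :: "'v set \<Rightarrow> 'e set \<Rightarrow> ('e \<Rightarrow> 'v) \<Rightarrow> ('e \<Rightarrow> 'v) \<Rightarrow> 'e set \<Rightarrow> bool" where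
  "spanning_tree V E tail head T \<longleftrightarrow> T \<subseteq> E \<and> connected_on V T tail head
     \<and> (\<forall>e\<in>T. \<not> connected_on V (T - {e}) tail head)"

definition einner :: "'e set \<Rightarrow> ('e \<Rightarrow> real) \<Rightarrow> ('e \<Rightarrow> real) \<Rightarrow> real" where
  "einner E x y = (\<Sum>e\<in>E. x e * y e)"

definition boundary :: "'e set \<Rightarrow> ('e \<Rightarrow> 'v) \<Rightarrow> ('e \<Rightarrow> 'v) \<Rightarrow> ('e \<Rightarrow> real) \<Rightarrow> 'v \<Rightarrow> real" where
  "boundary E tail head x v = (\<Sum>e\<in>E. x e * ((if head e = v then 1 else 0) - (if tail e = v then 1 else 0)))"

text \<open>Fundamental cycle vector of a chord a: the signed indicator of the unique cycle in
  T \<union> {a}, signs given by traversal in the direction of a.\<close>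
definition cycle_vec :: "'e set \<Rightarrow> ('e \<Rightarrow> 'v) \<Rightarrow> ('e \<Rightarrow> 'v) \<Rightarrow> 'e set \<Rightarrow> 'e \<Rightarrow> ('e \<Rightarrow> real)" where
  "cycle_vec E tail head T a = (THE c. (\<forall>e. c e \<in> {-1, 0, 1}) \<and> (\<forall>e. e \<notin> T \<union> {a} \<longrightarrow> c e = 0)
      \<and> c a = 1 \<and> (\<forall>v. boundary E tail head c v = 0))"

definition cut_side :: "'v set \<Rightarrow> ('e \<Rightarrow> 'v) \<Rightarrow> ('e \<Rightarrow> 'v) \<Rightarrow> 'e set \<Rightarrow> 'e \<Rightarrow> 'v set" where
  "cut_side V tail head T m = {v \<in> V. (tail m, v) \<in> (adj (T - {m}) tail head)\<^sup>*}"

definition cocycle_vec :: "'v set \<Rightarrow> ('e \<Rightarrow> 'v) \<Rightarrow> ('e \<Rightarrow> 'v) \<Rightarrow> 'e set \<Rightarrow> 'e \<Rightarrow> ('e \<Rightarrow> real)" where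
  "cocycle_vec V tail head T m = (\<lambda>e. let S = cut_side V tail head T m in
      if tail e \<in> S \<and> head e \<notin> S then 1 else if head e \<in> S \<and> tail e \<notin> S then -1 else 0)"

definition cycle_KS :: "'e set \<Rightarrow> ('e \<Rightarrow> 'v) \<Rightarrow> ('e \<Rightarrow> 'v) \<Rightarrow> 'e set \<Rightarrow> 'e list \<Rightarrow> real mat" where
  "cycle_KS E tail head T cs = mat (length cs) (length cs)
     (\<lambda>(i, j). einner E (cycle_vec E tail head T (cs ! i)) (cycle_vec E tail head T (cs ! j)))"

definition cocycle_KS :: "'v set \<Rightarrow> 'e set \<Rightarrow> ('e \<Rightarrow> 'v) \<Rightarrow> ('e \<Rightarrow> 'v) \<Rightarrow> 'e set \<Rightarrow> 'e list \<Rightarrow> real mat" where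
  "cocycle_KS V E tail head T ds = mat (length ds) (length ds)
     (\<lambda>(i, j). einner E (cocycle_vec V tail head T (ds ! i)) (cocycle_vec V tail head T (ds ! j)))"

definition eig_mult :: "real mat \<Rightarrow> real \<Rightarrow> nat" where
  "eig_mult A k = order k (char_poly A)"

end

theory Submission
  imports Defs "Jordan_Normal_Form.Matrix_Kernel"
begin

(* Let A be the |T| x |E - T| matrix with entries A(mu, a) = (fundamental cycle of the chord a)
   evaluated on the tree edge mu.  A fundamental cycle is 1 on its own chord and 0 on the other
   chords, while a fundamental cocycle is 1 on its own tree edge, 0 on the other tree edges and
   equals -A(mu, a) on the chord a.  Hence the two Kirchhoff-Symanzik matrices are
        K = 1 + A^T A        and        *K = 1 + A A^T.
   Everything then follows from linear algebra of a real m x n matrix A: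
   (1) 1 + A^T A is positive definite with all eigenvalues >= 1;
   (2) Sylvester's determinant identity gives
        (x - 1)^m char(1 + A^T A) = (x - 1)^n char(1 + A A^T),
       which compares roots and root multiplicities away from x = 1 and at x = 1;
   (3) for square A, A^T A and A A^T are similar (A + Phi intertwines them, where Phi maps
       ker A injectively into ker A^T), hence so are 1 + A^T A and 1 + A A^T. *)

section \<open>Real Gram matrices\<close>

lemma real_scalar_self_nonneg: "(v :: real vec) \<bullet> v \<ge> 0"
  unfolding scalar_prod_def by (auto intro: sum_nonneg)

lemma real_scalar_self_eq_0:
  fixes v :: "real vec"
  assumes v: "v \<in> carrier_vec n" and z: "v \<bullet> v = 0"
  shows "v = 0\<^sub>v n"
proof -
  have "(\<Sum>i\<in>{0..<dim_vec v}. v $ i * v $ i) = 0" using z unfolding scalar_prod_def by simp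
  hence "\<forall>i\<in>{0..<dim_vec v}. v $ i * v $ i = 0"
    by (subst sum_nonneg_eq_0_iff[symmetric], auto)
  thus ?thesis using v by (intro eq_vecI, auto)
qed

lemma gram_form:
  fixes B :: "'a :: comm_semiring_0 mat"
  assumes B: "B \<in> carrier_mat p q" and v: "v \<in> carrier_vec q"
  shows "((B\<^sup>T * B) *\<^sub>v v) \<bullet> v = (B *\<^sub>v v) \<bullet> (B *\<^sub>v v)"
proof -
  have "(B\<^sup>T * B) *\<^sub>v v = B\<^sup>T *\<^sub>v (B *\<^sub>v v)"
    using assoc_mult_mat_vec[of "B\<^sup>T" q p B q v] B v by auto
  thus ?thesis using transpose_vec_mult_scalar[OF B v, of "B *\<^sub>v v"] B v by auto
qed

text \<open>Every eigenvalue of \<open>1 + B\<^sup>T B\<close> is at least 1: for an eigenvector v,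
  \<open>k |v|\<^sup>2 = |v|\<^sup>2 + |B v|\<^sup>2\<close>.\<close>
lemma eigenvalue_one_plus_gram_ge_1:
  fixes B :: "real mat"
  assumes B: "B \<in> carrier_mat p q" and ev: "eigenvalue (1\<^sub>m q + B\<^sup>T * B) k"
  shows "k \<ge> 1"
proof -
  obtain v where v: "v \<in> carrier_vec q" "v \<noteq> 0\<^sub>v q"
    and Kv: "(1\<^sub>m q + B\<^sup>T * B) *\<^sub>v v = k \<cdot>\<^sub>v v"
    using ev B unfolding eigenvalue_def eigenvector_def by auto
  have BTB: "B\<^sup>T * B \<in> carrier_mat q q" using B by auto
  have "k * (v \<bullet> v) = ((1\<^sub>m q + B\<^sup>T * B) *\<^sub>v v) \<bullet> v" using Kv v by simp
  also have "\<dots> = v \<bullet> v + ((B\<^sup>T * B) *\<^sub>v v) \<bullet> v"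
    using add_mult_distrib_mat_vec[OF one_carrier_mat BTB v(1)] v BTB
    by (simp add: add_scalar_prod_distrib)
  also have "\<dots> = v \<bullet> v + (B *\<^sub>v v) \<bullet> (B *\<^sub>v v)" using gram_form[OF B v(1)] by simp
  finally have "1 * (v \<bullet> v) \<le> k * (v \<bullet> v)" using real_scalar_self_nonneg[of "B *\<^sub>v v"] by simp
  moreover have "v \<bullet> v > 0"
    using real_scalar_self_nonneg[of v] real_scalar_self_eq_0[OF v(1)] v(2) by fastforce
  ultimately show ?thesis by (simp add: mult_le_cancel_right)
qed

section \<open>Sylvester's determinant identity for \<open>A\<^sup>T A\<close> and \<open>A A\<^sup>T\<close>\<close>

text \<open>The block matrix \<open>[[1, A], [A\<^sup>T, y]]\<close>; eliminating either off-diagonal block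
  computes its determinant in two ways.\<close>
definition sylvester_block :: "'a :: comm_ring_1 mat \<Rightarrow> 'a \<Rightarrow> 'a mat" where
  "sylvester_block A y = four_block_mat (1\<^sub>m (dim_row A)) A A\<^sup>T (y \<cdot>\<^sub>m 1\<^sub>m (dim_col A))"

lemma sylvester_block_carrier:
  "A \<in> carrier_mat m n \<Longrightarrow> sylvester_block A y \<in> carrier_mat (m + n) (m + n)"
  unfolding sylvester_block_def by auto

lemma det_sylvester_block_cols:
  fixes A :: "'a :: idom mat"
  assumes A: "A \<in> carrier_mat m n"
  shows "det (sylvester_block A y) = det (y \<cdot>\<^sub>m 1\<^sub>m n - A\<^sup>T * A)"
proof -
  have At: "A\<^sup>T \<in> carrier_mat n m" and ATA: "A\<^sup>T * A \<in> carrier_mat n n" using A by auto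
  define L where "L = four_block_mat (1\<^sub>m m) (0\<^sub>m m n) (- A\<^sup>T) (1\<^sub>m n)"
  have L: "L \<in> carrier_mat (m + n) (m + n)" unfolding L_def using At by auto
  have "L * sylvester_block A y = four_block_mat (1\<^sub>m m * 1\<^sub>m m + 0\<^sub>m m n * A\<^sup>T)
      (1\<^sub>m m * A + 0\<^sub>m m n * (y \<cdot>\<^sub>m 1\<^sub>m n))
      (- A\<^sup>T * 1\<^sub>m m + 1\<^sub>m n * A\<^sup>T) (- A\<^sup>T * A + 1\<^sub>m n * (y \<cdot>\<^sub>m 1\<^sub>m n))"
    unfolding L_def sylvester_block_def using A At by (subst mult_four_block_mat) auto
  also have "\<dots> = four_block_mat (1\<^sub>m m) A (0\<^sub>m n m) (y \<cdot>\<^sub>m 1\<^sub>m n - A\<^sup>T * A)"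
    using A At ATA by (intro cong_four_block_mat) (auto intro!: eq_matI)
  finally have LM: "L * sylvester_block A y = \<dots>" .
  have "det L = 1" unfolding L_def
    by (subst det_four_block_mat_upper_right_zero[of _ m _ n], insert At, auto)
  hence "det (sylvester_block A y) = det (L * sylvester_block A y)"
    using det_mult[OF L sylvester_block_carrier[OF A]] by simp
  also have "\<dots> = det (y \<cdot>\<^sub>m 1\<^sub>m n - A\<^sup>T * A)" unfolding LM
    by (subst det_four_block_mat_lower_left_zero[of _ m _ n], insert A ATA, auto)
  finally show ?thesis .
qed

lemma det_sylvester_block_rows:
  fixes A :: "'a :: idom mat"
  assumes A: "A \<in> carrier_mat m n"
  shows "y ^ m * det (sylvester_block A y) = y ^ n * det (y \<cdot>\<^sub>m 1\<^sub>m m - A * A\<^sup>T)"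
proof -
  have At: "A\<^sup>T \<in> carrier_mat n m" and AAT: "A * A\<^sup>T \<in> carrier_mat m m" using A by auto
  define L where "L = four_block_mat (y \<cdot>\<^sub>m 1\<^sub>m m) (- A) (0\<^sub>m n m) (1\<^sub>m n)"
  have L: "L \<in> carrier_mat (m + n) (m + n)" unfolding L_def using A by auto
  have "L * sylvester_block A y = four_block_mat (y \<cdot>\<^sub>m 1\<^sub>m m * 1\<^sub>m m + - A * A\<^sup>T)
      (y \<cdot>\<^sub>m 1\<^sub>m m * A + - A * (y \<cdot>\<^sub>m 1\<^sub>m n))
      (0\<^sub>m n m * 1\<^sub>m m + 1\<^sub>m n * A\<^sup>T) (0\<^sub>m n m * A + 1\<^sub>m n * (y \<cdot>\<^sub>m 1\<^sub>m n))"
    unfolding L_def sylvester_block_def using A At by (subst mult_four_block_mat) auto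
  also have "\<dots> = four_block_mat (y \<cdot>\<^sub>m 1\<^sub>m m - A * A\<^sup>T) (0\<^sub>m m n) A\<^sup>T (y \<cdot>\<^sub>m 1\<^sub>m n)"
    using A At AAT by (intro cong_four_block_mat) (auto intro!: eq_matI)
  finally have LM: "L * sylvester_block A y = \<dots>" .
  have "det L = y ^ m" unfolding L_def
    by (subst det_four_block_mat_lower_left_zero[of _ m _ n], insert A, auto)
  hence "y ^ m * det (sylvester_block A y) = det (L * sylvester_block A y)"
    using det_mult[OF L sylvester_block_carrier[OF A]] by simp
  also have "\<dots> = det (y \<cdot>\<^sub>m 1\<^sub>m m - A * A\<^sup>T) * y ^ n" unfolding LM
    by (subst det_four_block_mat_upper_right_zero[of _ m _ n], insert At AAT, auto)
  finally show ?thesis by (simp add: mult.commute)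
qed

lemma char_poly_one_plus:
  fixes B :: "real mat"
  assumes B: "B \<in> carrier_mat n n"
  shows "poly (char_poly (1\<^sub>m n + B)) x = det ((x - 1) \<cdot>\<^sub>m 1\<^sub>m n - B)"
proof -
  have C: "1\<^sub>m n + B \<in> carrier_mat n n" using B by auto
  have "- char_matrix (1\<^sub>m n + B) x = (x - 1) \<cdot>\<^sub>m 1\<^sub>m n - B"
    using B by (intro eq_matI, auto simp: char_matrix_def)
  thus ?thesis using char_poly_matrix[OF C] by simp
qed

lemma char_poly_one_plus_gram:
  fixes A :: "real mat"
  assumes A: "A \<in> carrier_mat m n"
  shows "[:-1, 1:] ^ m * char_poly (1\<^sub>m n + A\<^sup>T * A) = [:-1, 1:] ^ n * char_poly (1\<^sub>m m + A * A\<^sup>T)"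
proof (rule poly_eq_poly_eq_iff[THEN iffD1], rule ext)
  fix x :: real
  have ATA: "A\<^sup>T * A \<in> carrier_mat n n" and AAT: "A * A\<^sup>T \<in> carrier_mat m m" using A by auto
  show "poly ([:-1, 1:] ^ m * char_poly (1\<^sub>m n + A\<^sup>T * A)) x
      = poly ([:-1, 1:] ^ n * char_poly (1\<^sub>m m + A * A\<^sup>T)) x"
    using det_sylvester_block_cols[OF A, of "x - 1"] det_sylvester_block_rows[OF A, of "x - 1"]
      char_poly_one_plus[OF ATA, of x] char_poly_one_plus[OF AAT, of x]
    by simp
qed

lemma order_cancel_linear_power:
  fixes P Q :: "real poly"
  assumes P: "P \<noteq> 0" and Q: "Q \<noteq> 0" and eq: "[:-1, 1:] ^ m * P = [:-1, 1:] ^ n * Q"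
  shows "\<And>k. k \<noteq> 1 \<Longrightarrow>
      (poly P k = 0 \<longleftrightarrow> poly Q k = 0) \<and> Polynomial.order k P = Polynomial.order k Q"
    and "int (Polynomial.order 1 P) - int (Polynomial.order 1 Q) = int n - int m"
proof -
  have L: "[:-1, 1:] ^ m * P \<noteq> 0" and R: "[:-1, 1:] ^ n * Q \<noteq> 0" using P Q by auto
  have ord: "Polynomial.order k ([:-1, 1:] ^ m * P) = Polynomial.order k ([:-1, 1:] ^ n * Q)" for k
    using eq by simp
  note order_mult_L = order_mult[OF L] and order_mult_R = order_mult[OF R]
  show "(poly P k = 0 \<longleftrightarrow> poly Q k = 0) \<and> Polynomial.order k P = Polynomial.order k Q"
    if k: "k \<noteq> 1" for k
  proof
    have "(k - 1) ^ m * poly P k = (k - 1) ^ n * poly Q k"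
      using arg_cong[OF eq, of "\<lambda>p. poly p k"] by simp
    thus "poly P k = 0 \<longleftrightarrow> poly Q k = 0" using k by auto
    have "Polynomial.order k ([:-1, 1::real:] ^ j) = 0" for j using k by (simp add: order_0I)
    thus "Polynomial.order k P = Polynomial.order k Q" using ord[of k] order_mult_L order_mult_R by simp
  qed
  have "Polynomial.order 1 ([:-1, 1::real:] ^ j) = j" for j using order_power_n_n[of 1 j] by simp
  hence "m + Polynomial.order 1 P = n + Polynomial.order 1 Q"
    using ord[of 1] order_mult_L order_mult_R by simp
  thus "int (Polynomial.order 1 P) - int (Polynomial.order 1 Q) = int n - int m" by simp
qed

section \<open>Similarity of \<open>A\<^sup>T A\<close> and \<open>A A\<^sup>T\<close> for square A\<close>

context vec_space
begin

lemma lincomb_as_mat_of_cols: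
  assumes ws: "set ws \<subseteq> carrier_vec n" "distinct ws"
  shows "lincomb a (set ws) = mat_of_cols n ws *\<^sub>v vec (length ws) (\<lambda>i. a (ws ! i))"
proof -
  have "lincomb a (set ws) = lincomb_list (\<lambda>i. a (ws ! i)) ws"
    using lincomb_as_lincomb_list_distinct[of ws a] ws by auto
  also have "\<dots> = mat_of_cols n ws *\<^sub>v vec (length ws) (\<lambda>i. a (ws ! i))"
    by (rule lincomb_list_as_mat_mult) (use ws in auto)
  finally show ?thesis .
qed

lemma span_in_range_mat_of_cols:
  assumes ws: "set ws \<subseteq> carrier_vec n" "distinct ws" and v: "v \<in> span (set ws)"
  shows "\<exists>c \<in> carrier_vec (length ws). v = mat_of_cols n ws *\<^sub>v c"
proof -
  obtain a where "v = lincomb a (set ws)"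
    using v finite_span[OF finite_set ws(1)] by auto
  thus ?thesis using lincomb_as_mat_of_cols[OF ws] by auto
qed

lemma mat_of_cols_injective:
  assumes ws: "set ws \<subseteq> carrier_vec n" "distinct ws" and indep: "lin_indpt (set ws)"
    and c: "c \<in> carrier_vec (length ws)" and zero: "mat_of_cols n ws *\<^sub>v c = 0\<^sub>v n"
  shows "c = 0\<^sub>v (length ws)"
proof -
  have inj: "inj_on ((!) ws) {..<length ws}" using ws(2) by (intro inj_on_nth) auto
  define a where "a w = c $ the_inv_into {..<length ws} ((!) ws) w" for w
  have a_nth: "a (ws ! i) = c $ i" if "i < length ws" for i
    unfolding a_def using the_inv_into_f_f[OF inj] that by auto
  have "vec (length ws) (\<lambda>i. a (ws ! i)) = c" using c a_nth by auto
  hence "lincomb a (set ws) = 0\<^sub>v n" using lincomb_as_mat_of_cols[OF ws, of a] zero by simp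
  hence "a \<in> set ws \<rightarrow> {0}" using not_lindepD[OF indep finite_set subset_refl] by auto
  thus ?thesis using c a_nth by (intro eq_vecI) (auto simp: Pi_iff)
qed

end

lemma kernel_basis_mat:
  fixes A :: "'a :: field mat"
  assumes A: "A \<in> carrier_mat nr nc"
  obtains k Z where "Z \<in> carrier_mat nc k" "A * Z = 0\<^sub>m nr k"
    "\<And>v. v \<in> carrier_vec nc \<Longrightarrow> A *\<^sub>v v = 0\<^sub>v nr \<Longrightarrow> \<exists>c \<in> carrier_vec k. v = Z *\<^sub>v c"
    "\<And>c. c \<in> carrier_vec k \<Longrightarrow> Z *\<^sub>v c = 0\<^sub>v nc \<Longrightarrow> c = 0\<^sub>v k"
proof -
  interpret kernel nr nc A by (unfold_locales, rule A)
  obtain B where "finite B" and basis: "basis B" using kernel_basis_exists[OF A] by blast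
  then obtain ws where ws: "set ws = B" "distinct ws" using finite_distinct_list by blast
  have ker: "set ws \<subseteq> mat_kernel A" and indep: "NC.lin_indpt (set ws)"
    and span: "NC.span (set ws) = mat_kernel A"
    using basis ws span_same lindep_same unfolding Ker.basis_def by auto
  have carr: "set ws \<subseteq> carrier_vec nc" using ker mat_kernel_carrier[OF A] by auto
  define Z where "Z = mat_of_cols nc ws"
  have Z: "Z \<in> carrier_mat nc (length ws)" unfolding Z_def by auto
  have "A * Z = 0\<^sub>m nr (length ws)"
  proof (rule eq_matI)
    fix i j assume i: "i < dim_row (0\<^sub>m nr (length ws))" and j: "j < dim_col (0\<^sub>m nr (length ws))"
    have "ws ! j \<in> mat_kernel A" using ker j by auto
    hence "A *\<^sub>v (ws ! j) = 0\<^sub>v nr" using mat_kernelD[OF A] by blast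
    moreover have "col Z j = ws ! j"
      unfolding Z_def using j carr by (intro col_mat_of_cols) auto
    ultimately have "row A i \<bullet> col Z j = 0" using i A index_mult_mat_vec[of i A "ws ! j"] by auto
    thus "(A * Z) $$ (i, j) = 0\<^sub>m nr (length ws) $$ (i, j)" using i j A Z by simp
  qed (use A Z in auto)
  moreover have "\<exists>c \<in> carrier_vec (length ws). v = Z *\<^sub>v c"
    if "v \<in> carrier_vec nc" "A *\<^sub>v v = 0\<^sub>v nr" for v
    using NC.span_in_range_mat_of_cols[OF carr ws(2)] span mat_kernelI[OF A] that
    unfolding Z_def by auto
  moreover have "c = 0\<^sub>v (length ws)" if "c \<in> carrier_vec (length ws)" "Z *\<^sub>v c = 0\<^sub>v nc" for c
    using NC.mat_of_cols_injective[OF carr ws(2) indep] that unfolding Z_def by auto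
  ultimately show ?thesis using that Z by blast
qed

lemma similar_mat_by_injective_intertwiner:
  fixes X Y M :: "'a :: field mat"
  assumes X: "X \<in> carrier_mat n n" and Y: "Y \<in> carrier_mat n n" and M: "M \<in> carrier_mat n n"
    and inj: "\<And>x. x \<in> carrier_vec n \<Longrightarrow> M *\<^sub>v x = 0\<^sub>v n \<Longrightarrow> x = 0\<^sub>v n"
    and intertwine: "M * X = Y * M"
  shows "similar_mat X Y"
proof -
  have "det M \<noteq> 0" using det_0_iff_vec_prod_zero[OF M] inj by auto
  from det_non_zero_imp_unit[OF M this, unfolded Units_def, of "()"]
  obtain S where S: "S \<in> carrier_mat n n" and SM: "S * M = 1\<^sub>m n" and MS: "M * S = 1\<^sub>m n"
    by (auto simp: ring_mat_def)
  have "S * Y * M = S * (M * X)" unfolding intertwine by (rule assoc_mult_mat[OF S Y M])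
  also have "\<dots> = (S * M) * X" by (rule assoc_mult_mat[OF S M X, symmetric])
  also have "\<dots> = X" unfolding SM using X by simp
  finally have "X = S * Y * M" by simp
  with X Y S M SM MS show ?thesis by (intro similar_matI[where P = S and Q = M]) auto
qed

text \<open>If \<open>\<Phi>\<close> is annihilated by \<open>A\<^sup>T\<close> on both sides and is injective on ker A, then
  \<open>A + \<Phi>\<close> is injective and intertwines \<open>A\<^sup>T A\<close> with \<open>A A\<^sup>T\<close>.\<close>
lemma gram_similar_by_kernel_map:
  fixes A \<Phi> :: "real mat"
  assumes A: "A \<in> carrier_mat n n" and \<Phi>: "\<Phi> \<in> carrier_mat n n"
    and left: "A\<^sup>T * \<Phi> = 0\<^sub>m n n" and right: "\<Phi> * A\<^sup>T = 0\<^sub>m n n"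
    and inj_on_ker: "\<And>x. x \<in> carrier_vec n \<Longrightarrow> A *\<^sub>v x = 0\<^sub>v n \<Longrightarrow> \<Phi> *\<^sub>v x = 0\<^sub>v n \<Longrightarrow> x = 0\<^sub>v n"
  shows "similar_mat (A\<^sup>T * A) (A * A\<^sup>T)"
proof (rule similar_mat_by_injective_intertwiner[where M = "A + \<Phi>"])
  have At: "A\<^sup>T \<in> carrier_mat n n" using A by auto
  have ATA: "A\<^sup>T * A \<in> carrier_mat n n" and AAT: "A * A\<^sup>T \<in> carrier_mat n n" using A by auto
  have "(A + \<Phi>) * (A\<^sup>T * A) = A * (A\<^sup>T * A) + \<Phi> * (A\<^sup>T * A)"
    by (rule add_mult_distrib_mat[OF A \<Phi> ATA])
  also have "\<Phi> * (A\<^sup>T * A) = (\<Phi> * A\<^sup>T) * A" by (rule assoc_mult_mat[OF \<Phi> At A, symmetric])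
  also have "\<dots> = A * (A\<^sup>T * \<Phi>)" unfolding left right using A by simp
  also have "\<dots> = (A * A\<^sup>T) * \<Phi>" by (rule assoc_mult_mat[OF A At \<Phi>, symmetric])
  also have "A * (A\<^sup>T * A) = (A * A\<^sup>T) * A" by (rule assoc_mult_mat[OF A At A, symmetric])
  also have "(A * A\<^sup>T) * A + (A * A\<^sup>T) * \<Phi> = (A * A\<^sup>T) * (A + \<Phi>)"
    by (rule mult_add_distrib_mat[OF AAT A \<Phi>, symmetric])
  finally show "(A + \<Phi>) * (A\<^sup>T * A) = (A * A\<^sup>T) * (A + \<Phi>)" .
  fix x assume x: "x \<in> carrier_vec n" and Mx: "(A + \<Phi>) *\<^sub>v x = 0\<^sub>v n"
  have AP: "A + \<Phi> \<in> carrier_mat n n" using A \<Phi> by auto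
  have "A\<^sup>T * (A + \<Phi>) = A\<^sup>T * A + A\<^sup>T * \<Phi>" by (rule mult_add_distrib_mat[OF At A \<Phi>])
  also have "\<dots> = A\<^sup>T * A" unfolding left using ATA by simp
  finally have "(A\<^sup>T * A) *\<^sub>v x = A\<^sup>T *\<^sub>v ((A + \<Phi>) *\<^sub>v x)"
    using assoc_mult_mat_vec[OF At AP x] by simp
  also have "\<dots> = 0\<^sub>v n" unfolding Mx using At by auto
  finally have "(A *\<^sub>v x) \<bullet> (A *\<^sub>v x) = 0" using gram_form[OF A x] x by simp
  hence Ax: "A *\<^sub>v x = 0\<^sub>v n" using real_scalar_self_eq_0[of "A *\<^sub>v x" n] A x by auto
  have "0\<^sub>v n = A *\<^sub>v x + \<Phi> *\<^sub>v x" using add_mult_distrib_mat_vec[OF A \<Phi> x] Mx by simp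
  hence "\<Phi> *\<^sub>v x = 0\<^sub>v n" unfolding Ax using \<Phi> x by simp
  thus "x = 0\<^sub>v n" by (rule inj_on_ker[OF x Ax])
qed (use A \<Phi> in auto)

definition embed_mat :: "nat \<Rightarrow> nat \<Rightarrow> 'a :: zero_neq_one mat" where
  "embed_mat l k = mat l k (\<lambda>(i, j). if i = j then 1 else 0)"

lemma embed_mat_injective:
  fixes y :: "'a :: semiring_1 vec"
  assumes kl: "k \<le> l" and y: "y \<in> carrier_vec k" and zero: "embed_mat l k *\<^sub>v y = 0\<^sub>v l"
  shows "y = 0\<^sub>v k"
proof (rule eq_vecI)
  fix i assume "i < dim_vec (0\<^sub>v k)"
  hence i: "i < k" by simp
  have "(embed_mat l k *\<^sub>v y) $ i = (\<Sum>j<k. (if i = j then 1 else 0) * y $ j)"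
    using i kl y by (auto simp: embed_mat_def scalar_prod_def lessThan_atLeast0)
  also have "\<dots> = (\<Sum>j<k. if j = i then y $ j else 0)" by (intro sum.cong) auto
  also have "\<dots> = y $ i" using i by simp
  finally show "y $ i = 0\<^sub>v k $ i" using zero i kl by simp
qed (use y in auto)

text \<open>With Z a basis matrix of ker A and W an injective map into ker \<open>A\<^sup>T\<close> of at least
  the same dimension, \<open>\<Phi> = W E Z\<^sup>T\<close> satisfies the hypotheses of the previous lemma.\<close>
lemma gram_similar_if_kernel_dim_le:
  fixes A Z W :: "real mat"
  assumes A: "A \<in> carrier_mat n n"
    and Z: "Z \<in> carrier_mat n k" and AZ: "A * Z = 0\<^sub>m n k"
    and Z_span: "\<And>v. v \<in> carrier_vec n \<Longrightarrow> A *\<^sub>v v = 0\<^sub>v n \<Longrightarrow> \<exists>c \<in> carrier_vec k. v = Z *\<^sub>v c"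
    and W: "W \<in> carrier_mat n l" and AW: "A\<^sup>T * W = 0\<^sub>m n l"
    and W_inj: "\<And>c. c \<in> carrier_vec l \<Longrightarrow> W *\<^sub>v c = 0\<^sub>v n \<Longrightarrow> c = 0\<^sub>v l"
    and kl: "k \<le> l"
  shows "similar_mat (A\<^sup>T * A) (A * A\<^sup>T)"
proof -
  define E :: "real mat" where "E = embed_mat l k"
  have E: "E \<in> carrier_mat l k" unfolding E_def embed_mat_def by auto
  have WE: "W * E \<in> carrier_mat n k" and At: "A\<^sup>T \<in> carrier_mat n n"
    and Zt: "Z\<^sup>T \<in> carrier_mat k n" using W E A Z by auto
  have \<Phi>: "W * E * Z\<^sup>T \<in> carrier_mat n n" using WE Zt by auto
  have "A\<^sup>T * (W * E * Z\<^sup>T) = (A\<^sup>T * (W * E)) * Z\<^sup>T"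
    by (rule assoc_mult_mat[OF At WE Zt, symmetric])
  also have "A\<^sup>T * (W * E) = 0\<^sub>m n k"
    using assoc_mult_mat[OF At W E, symmetric] left_mult_zero_mat[OF E] unfolding AW by simp
  finally have left: "A\<^sup>T * (W * E * Z\<^sup>T) = 0\<^sub>m n n" using left_mult_zero_mat[OF Zt] by simp
  have ZtAt: "Z\<^sup>T * A\<^sup>T = 0\<^sub>m k n" using transpose_mult[OF A Z] AZ by simp
  have "(W * E * Z\<^sup>T) * A\<^sup>T = (W * E) * (Z\<^sup>T * A\<^sup>T)" by (rule assoc_mult_mat[OF WE Zt At])
  hence right: "(W * E * Z\<^sup>T) * A\<^sup>T = 0\<^sub>m n n" unfolding ZtAt using right_mult_zero_mat[OF WE] by simp
  have inj_on_ker: "x = 0\<^sub>v n"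
    if x: "x \<in> carrier_vec n" and Ax: "A *\<^sub>v x = 0\<^sub>v n" and \<Phi>x: "(W * E * Z\<^sup>T) *\<^sub>v x = 0\<^sub>v n"
    for x
  proof -
    have Ztx: "Z\<^sup>T *\<^sub>v x \<in> carrier_vec k" using Zt x by auto
    have EZtx: "E *\<^sub>v (Z\<^sup>T *\<^sub>v x) \<in> carrier_vec l" using E Ztx by auto
    have "W *\<^sub>v (E *\<^sub>v (Z\<^sup>T *\<^sub>v x)) = (W * E * Z\<^sup>T) *\<^sub>v x"
      unfolding assoc_mult_mat_vec[OF WE Zt x] assoc_mult_mat_vec[OF W E Ztx] ..
    hence "E *\<^sub>v (Z\<^sup>T *\<^sub>v x) = 0\<^sub>v l" using W_inj[OF EZtx] \<Phi>x by simp
    hence Ztx0: "Z\<^sup>T *\<^sub>v x = 0\<^sub>v k" using embed_mat_injective[OF kl Ztx] unfolding E_def by simp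
    obtain c where c: "c \<in> carrier_vec k" and xc: "x = Z *\<^sub>v c" using Z_span[OF x Ax] by blast
    have "x \<bullet> x = (Z\<^sup>T *\<^sub>v x) \<bullet> c"
      using transpose_vec_mult_scalar[OF Z c x] unfolding xc[symmetric] by simp
    also have "\<dots> = 0" unfolding Ztx0 using c by simp
    finally show ?thesis using real_scalar_self_eq_0[OF x] by simp
  qed
  show ?thesis by (rule gram_similar_by_kernel_map[OF A \<Phi> left right inj_on_ker])
qed

text \<open>For a square real matrix A, \<open>A\<^sup>T A\<close> and \<open>A A\<^sup>T\<close> are similar; by symmetry in
  \<open>A \<leftrightarrow> A\<^sup>T\<close> we may assume dim ker A \<open>\<le>\<close> dim ker \<open>A\<^sup>T\<close>.\<close>
lemma gram_similar_square:
  fixes A :: "real mat"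
  assumes A: "A \<in> carrier_mat n n"
  shows "similar_mat (A\<^sup>T * A) (A * A\<^sup>T)"
proof -
  have At: "A\<^sup>T \<in> carrier_mat n n" using A by auto
  obtain k Z where Z: "Z \<in> carrier_mat n k" "A * Z = 0\<^sub>m n k"
    "\<And>v. v \<in> carrier_vec n \<Longrightarrow> A *\<^sub>v v = 0\<^sub>v n \<Longrightarrow> \<exists>c \<in> carrier_vec k. v = Z *\<^sub>v c"
    "\<And>c. c \<in> carrier_vec k \<Longrightarrow> Z *\<^sub>v c = 0\<^sub>v n \<Longrightarrow> c = 0\<^sub>v k"
    by (rule kernel_basis_mat[OF A]) (rule that)
  obtain l W where W: "W \<in> carrier_mat n l" "A\<^sup>T * W = 0\<^sub>m n l"
    "\<And>v. v \<in> carrier_vec n \<Longrightarrow> A\<^sup>T *\<^sub>v v = 0\<^sub>v n \<Longrightarrow> \<exists>c \<in> carrier_vec l. v = W *\<^sub>v c"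
    "\<And>c. c \<in> carrier_vec l \<Longrightarrow> W *\<^sub>v c = 0\<^sub>v n \<Longrightarrow> c = 0\<^sub>v l"
    by (rule kernel_basis_mat[OF At]) (rule that)
  show ?thesis
  proof (cases "k \<le> l")
    case True
    show ?thesis by (rule gram_similar_if_kernel_dim_le[OF A Z(1-3) W(1,2,4) True])
  next
    case False
    have "similar_mat (A\<^sup>T\<^sup>T * A\<^sup>T) (A\<^sup>T * A\<^sup>T\<^sup>T)"
    proof (rule gram_similar_if_kernel_dim_le[OF At W(1) _ W(3) Z(1) _ Z(4)])
      show "A\<^sup>T * W = 0\<^sub>m n l" by (rule W(2))
      show "A\<^sup>T\<^sup>T * Z = 0\<^sub>m n k" using Z(2) by simp
      show "l \<le> k" using False by simp
    qed
    thus ?thesis using similar_mat_sym by simp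
  qed
qed

lemma similar_mat_one_plus:
  fixes X Y :: "'a :: comm_ring_1 mat"
  assumes sim: "similar_mat X Y" and X: "X \<in> carrier_mat n n"
  shows "similar_mat (1\<^sub>m n + X) (1\<^sub>m n + Y)"
proof -
  obtain P Q where wit: "similar_mat_wit X Y P Q" using sim unfolding similar_mat_def by auto
  have n: "n = dim_row X" using X by auto
  note w = similar_mat_witD[OF n wit]
  have "P * (1\<^sub>m n + Y) = P * 1\<^sub>m n + P * Y"
    by (rule mult_add_distrib_mat[of P n n]) (use w in auto)
  hence "P * (1\<^sub>m n + Y) * Q = (P + P * Y) * Q" using w by simp
  also have "\<dots> = P * Q + P * Y * Q" using w by (simp add: add_mult_distrib_mat)
  also have "\<dots> = 1\<^sub>m n + X" using w by simp
  finally have "similar_mat_wit (1\<^sub>m n + X) (1\<^sub>m n + Y) P Q"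
    unfolding similar_mat_wit_def Let_def using w by auto
  thus ?thesis unfolding similar_mat_def by blast
qed

theorem one_plus_gram_spectra:
  fixes A :: "real mat"
  assumes A: "A \<in> carrier_mat m n"
  defines "K \<equiv> 1\<^sub>m n + A\<^sup>T * A" and "K' \<equiv> 1\<^sub>m m + A * A\<^sup>T"
  shows "\<forall>k. eigenvalue K k \<longrightarrow> k \<ge> 1"
    and "\<forall>k. eigenvalue K' k \<longrightarrow> k \<ge> 1"
    and "\<forall>k > 1. (eigenvalue K k \<longleftrightarrow> eigenvalue K' k) \<and> eig_mult K k = eig_mult K' k"
    and "int (eig_mult K 1) - int (eig_mult K' 1) = int n - int m"
    and "n = m \<Longrightarrow> char_poly K = char_poly K' \<and> similar_mat K K'"
proof -
  have At: "A\<^sup>T \<in> carrier_mat n m" using A by auto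
  have K: "K \<in> carrier_mat n n" and K': "K' \<in> carrier_mat m m" unfolding K_def K'_def using A by auto
  show "\<forall>k. eigenvalue K k \<longrightarrow> k \<ge> 1" unfolding K_def using eigenvalue_one_plus_gram_ge_1[OF A] by blast
  show "\<forall>k. eigenvalue K' k \<longrightarrow> k \<ge> 1" unfolding K'_def
    using eigenvalue_one_plus_gram_ge_1[OF At] by simp
  have "char_poly K \<noteq> 0" "char_poly K' \<noteq> 0"
    using degree_monic_char_poly[OF K] degree_monic_char_poly[OF K'] by auto
  note orders = order_cancel_linear_power[OF this char_poly_one_plus_gram[OF A, folded K_def K'_def]]
  show "\<forall>k > 1. (eigenvalue K k \<longleftrightarrow> eigenvalue K' k) \<and> eig_mult K k = eig_mult K' k"
    using orders(1) eigenvalue_root_char_poly[OF K] eigenvalue_root_char_poly[OF K']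
    unfolding eig_mult_def by auto
  show "int (eig_mult K 1) - int (eig_mult K' 1) = int n - int m"
    using orders(2) unfolding eig_mult_def .
  assume nm: "n = m"
  have "similar_mat K K'" unfolding K_def K'_def
    using similar_mat_one_plus[OF gram_similar_square] A nm by auto
  thus "char_poly K = char_poly K' \<and> similar_mat K K'" using char_poly_similar by blast
qed

section \<open>Fundamental cycles and cocycles of a spanning tree\<close>

lemma sum_distinct_list_nth:
  assumes "distinct xs"
  shows "(\<Sum>x\<in>set xs. f x) = (\<Sum>i<length xs. f (xs ! i))"
proof -
  have "inj_on ((!) xs) {..<length xs}" using assms by (intro inj_on_nth) auto
  moreover have "set xs = (!) xs ` {..<length xs}" by (auto simp: in_set_conv_nth)
  ultimately show ?thesis using sum.reindex[of "(!) xs" "{..<length xs}" f] by simp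
qed

locale spanning_tree_graph =
  fixes V :: "'v set" and E :: "'e set" and tail head :: "'e \<Rightarrow> 'v" and T :: "'e set"
  assumes graph: "graph V E tail head" and tree: "spanning_tree V E tail head T"
begin

definition side :: "'e \<Rightarrow> 'v \<Rightarrow> real" where
  "side \<mu> v = (if v \<in> cut_side V tail head T \<mu> then 1 else 0)"

definition incidence :: "'e \<Rightarrow> 'v \<Rightarrow> real" where
  "incidence e v = (if head e = v then 1 else 0) - (if tail e = v then 1 else 0)"

lemma finite_V: "finite V" and finite_E: "finite E" and T_sub_E: "T \<subseteq> E"
  and finite_T: "finite T" and ends_in_V: "e \<in> E \<Longrightarrow> tail e \<in> V \<and> head e \<in> V"
  using graph tree unfolding graph_def spanning_tree_def by (auto intro: finite_subset)

lemma T_connected: "connected_on V T tail head"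
  using tree unfolding spanning_tree_def by auto

lemma T_minimal: "e \<in> T \<Longrightarrow> \<not> connected_on V (T - {e}) tail head"
  using tree unfolding spanning_tree_def by auto

lemma adj_rtrancl_sym: "(u, v) \<in> (adj F tail head)\<^sup>* \<Longrightarrow> (v, u) \<in> (adj F tail head)\<^sup>*"
proof -
  have "sym (adj F tail head)" unfolding adj_def sym_def by auto
  hence "sym ((adj F tail head)\<^sup>*)" by (rule sym_rtrancl)
  thus "(u, v) \<in> (adj F tail head)\<^sup>* \<Longrightarrow> (v, u) \<in> (adj F tail head)\<^sup>*" by (rule symD)
qed

lemma cut_side_tree_edge:
  assumes e: "e \<in> T" and ne: "e \<noteq> \<mu>"
  shows "tail e \<in> cut_side V tail head T \<mu> \<longleftrightarrow> head e \<in> cut_side V tail head T \<mu>"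
proof -
  let ?R = "adj (T - {\<mu>}) tail head"
  have "(tail e, head e) \<in> ?R" "(head e, tail e) \<in> ?R" unfolding adj_def using e ne by auto
  thus ?thesis using ends_in_V[of e] e T_sub_E unfolding cut_side_def
    by (auto intro: rtrancl_into_rtrancl)
qed

text \<open>By minimality of T, the head of \<open>\<mu>\<close> is not on the tail side of its own cut:
  otherwise \<open>T - {\<mu>}\<close> would still connect V.\<close>
lemma head_not_in_cut_side:
  assumes \<mu>: "\<mu> \<in> T"
  shows "head \<mu> \<notin> cut_side V tail head T \<mu>"
proof
  let ?R = "adj (T - {\<mu>}) tail head"
  assume "head \<mu> \<in> cut_side V tail head T \<mu>"
  hence th: "(tail \<mu>, head \<mu>) \<in> ?R\<^sup>*" unfolding cut_side_def by auto
  have "adj T tail head \<subseteq> ?R\<^sup>*"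
  proof
    fix p assume "p \<in> adj T tail head"
    then obtain e where e: "e \<in> T" and p: "p = (tail e, head e) \<or> p = (head e, tail e)"
      unfolding adj_def by auto
    show "p \<in> ?R\<^sup>*"
    proof (cases "e = \<mu>")
      case True
      thus ?thesis using p th adj_rtrancl_sym[OF th] by auto
    next
      case False
      hence "p \<in> ?R" using p e unfolding adj_def by auto
      thus ?thesis by auto
    qed
  qed
  hence "(adj T tail head)\<^sup>* \<subseteq> ?R\<^sup>*" using rtrancl_subset_rtrancl by blast
  hence "connected_on V (T - {\<mu>}) tail head" using T_connected unfolding connected_on_def by auto
  thus False using T_minimal[OF \<mu>] by simp
qed

lemma side_tail: "\<mu> \<in> T \<Longrightarrow> side \<mu> (tail \<mu>) = 1"
  unfolding side_def cut_side_def using ends_in_V T_sub_E by auto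

lemma side_head: "\<mu> \<in> T \<Longrightarrow> side \<mu> (head \<mu>) = 0"
  unfolding side_def using head_not_in_cut_side by auto

lemma side_same: "e \<in> T \<Longrightarrow> e \<noteq> \<mu> \<Longrightarrow> side \<mu> (tail e) = side \<mu> (head e)"
  unfolding side_def using cut_side_tree_edge by auto

text \<open>Crossing the tree
  edge \<open>\<nu>\<close> changes only the term of \<open>\<nu>\<close>, by \<open>\<partial>\<nu>(v)\<close>, which is compensated by
  the Kronecker term; hence it does not depend on u.  This encodes that the fundamental
  cycles below have zero boundary, and it also yields \<open>|T| = |V| - 1\<close>.\<close>
definition cut_flow :: "'v \<Rightarrow> 'v \<Rightarrow> real" where
  "cut_flow u v = (\<Sum>\<mu>\<in>T. side \<mu> u * incidence \<mu> v)"

definition cut_balance :: "'v \<Rightarrow> 'v \<Rightarrow> real" where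
  "cut_balance u v = cut_flow u v + (if u = v then 1 else 0)"

lemma cut_balance_tree_edge:
  assumes \<nu>: "\<nu> \<in> T"
  shows "cut_balance (tail \<nu>) v = cut_balance (head \<nu>) v"
proof -
  have "cut_flow (tail \<nu>) v - cut_flow (head \<nu>) v
      = (\<Sum>\<mu>\<in>T. (side \<mu> (tail \<nu>) - side \<mu> (head \<nu>)) * incidence \<mu> v)"
    unfolding cut_flow_def by (simp add: sum_subtractf left_diff_distrib)
  also have "\<dots> = (\<Sum>\<mu>\<in>T. if \<mu> = \<nu> then incidence \<nu> v else 0)"
    using side_tail[OF \<nu>] side_head[OF \<nu>] side_same[OF \<nu>] by (intro sum.cong) auto
  also have "\<dots> = incidence \<nu> v" using \<nu> finite_T by simp
  finally show ?thesis unfolding cut_balance_def incidence_def by simp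
qed

lemma cut_balance_const:
  assumes "u \<in> V" "w \<in> V"
  shows "cut_balance u v = cut_balance w v"
proof -
  have "cut_balance u v = cut_balance w v" if "(u, w) \<in> (adj T tail head)\<^sup>*" for u w
    using that
  proof (induction rule: rtrancl_induct)
    case (step y z)
    then obtain e where "e \<in> T" "(y, z) = (tail e, head e) \<or> (y, z) = (head e, tail e)"
      unfolding adj_def by auto
    thus ?case using step.IH cut_balance_tree_edge[of e v] by auto
  qed simp
  thus ?thesis using T_connected assms unfolding connected_on_def by blast
qed

text \<open>Double counting \<open>\<Sum>\<^sub>\<mu> \<Sum>\<^sub>w (side \<mu> r - side \<mu> w) \<partial>\<mu>(w)\<close> for a fixed root r:
  each tree edge contributes 1, each vertex other than r contributes 1.\<close>
lemma card_T: "card T = card V - 1"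
proof -
  obtain r where r: "r \<in> V" using graph unfolding graph_def by auto
  define f where "f \<mu> w = (side \<mu> r - side \<mu> w) * incidence \<mu> w" for \<mu> w
  have per_edge: "(\<Sum>w\<in>V. f \<mu> w) = 1" if \<mu>: "\<mu> \<in> T" for \<mu>
  proof -
    have "f \<mu> w = (if head \<mu> = w then side \<mu> r - side \<mu> (head \<mu>) else 0)
        - (if tail \<mu> = w then side \<mu> r - side \<mu> (tail \<mu>) else 0)" for w
      unfolding f_def incidence_def by auto
    hence "(\<Sum>w\<in>V. f \<mu> w) = (side \<mu> r - side \<mu> (head \<mu>)) - (side \<mu> r - side \<mu> (tail \<mu>))"
      using ends_in_V[of \<mu>] \<mu> T_sub_E finite_V by (auto simp: sum_subtractf)
    thus ?thesis using side_tail[OF \<mu>] side_head[OF \<mu>] by simp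
  qed
  have per_vertex: "(\<Sum>\<mu>\<in>T. f \<mu> w) = (if w = r then 0 else 1)" if w: "w \<in> V" for w
  proof -
    have "(\<Sum>\<mu>\<in>T. f \<mu> w) = cut_flow r w - cut_flow w w"
      unfolding f_def cut_flow_def by (simp add: sum_subtractf left_diff_distrib)
    thus ?thesis using cut_balance_const[OF r w, of w] unfolding cut_balance_def by auto
  qed
  have "real (card T) = (\<Sum>\<mu>\<in>T. \<Sum>w\<in>V. f \<mu> w)" using per_edge by simp
  also have "\<dots> = (\<Sum>w\<in>V. \<Sum>\<mu>\<in>T. f \<mu> w)" by (rule sum.swap)
  also have "\<dots> = (\<Sum>w\<in>V - {r}. 1)"
    using per_vertex finite_V r by (simp add: sum.If_cases Diff_eq)
  finally show ?thesis using r finite_V by simp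
qed

definition fund_cycle :: "'e \<Rightarrow> 'e \<Rightarrow> real" where
  "fund_cycle a e = (if e = a then 1 else if e \<in> T then side e (head a) - side e (tail a) else 0)"

lemma boundary_fund_cycle:
  assumes a: "a \<in> E" "a \<notin> T"
  shows "boundary E tail head (fund_cycle a) v = 0"
proof -
  have "fund_cycle a e * incidence e v = (if e = a then incidence a v else 0)
      + (if e \<in> T then (side e (head a) - side e (tail a)) * incidence e v else 0)" for e
    unfolding fund_cycle_def using a by auto
  hence "boundary E tail head (fund_cycle a) v = incidence a v
      + (\<Sum>e\<in>T. (side e (head a) - side e (tail a)) * incidence e v)"
    unfolding boundary_def incidence_def[symmetric]
    using a finite_E T_sub_E by (simp add: sum.distrib sum.If_cases Int_absorb1)
  also have "\<dots> = cut_balance (head a) v - cut_balance (tail a) v"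
    unfolding cut_balance_def cut_flow_def incidence_def
    by (simp add: sum_subtractf left_diff_distrib)
  also have "\<dots> = 0" using cut_balance_const[of "head a" "tail a" v] ends_in_V[OF a(1)] by simp
  finally show ?thesis .
qed

lemma boundary_sum_cut_side:
  "(\<Sum>v\<in>cut_side V tail head T \<mu>. boundary E tail head x v)
     = (\<Sum>e\<in>E. x e * (side \<mu> (head e) - side \<mu> (tail e)))"
proof -
  have fin: "finite (cut_side V tail head T \<mu>)"
    using finite_V unfolding cut_side_def by auto
  have "(\<Sum>v\<in>cut_side V tail head T \<mu>. boundary E tail head x v)
      = (\<Sum>e\<in>E. x e * (\<Sum>v\<in>cut_side V tail head T \<mu>. incidence e v))"
    unfolding boundary_def incidence_def[symmetric]
    by (subst sum.swap) (simp add: sum_distrib_left)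
  also have "\<dots> = (\<Sum>e\<in>E. x e * (side \<mu> (head e) - side \<mu> (tail e)))"
    unfolding incidence_def side_def using fin by (simp add: sum_subtractf)
  finally show ?thesis .
qed

lemma cycle_supported_on_T_vanishes:
  assumes supp: "\<And>e. e \<notin> T \<Longrightarrow> x e = 0" and bd: "\<And>v. boundary E tail head x v = 0"
    and \<mu>: "\<mu> \<in> T"
  shows "x \<mu> = 0"
proof -
  have "0 = (\<Sum>e\<in>E. x e * (side \<mu> (head e) - side \<mu> (tail e)))"
    using boundary_sum_cut_side[where \<mu> = \<mu> and x = x] bd by simp
  also have "\<dots> = (\<Sum>e\<in>E. if e = \<mu> then - x \<mu> else 0)"
    using supp side_tail[OF \<mu>] side_head[OF \<mu>] side_same by (intro sum.cong) force+
  also have "\<dots> = - x \<mu>" using \<mu> T_sub_E finite_E by auto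
  finally show ?thesis by simp
qed

lemma cycle_vec_eq_fund_cycle:
  assumes a: "a \<in> E" "a \<notin> T"
  shows "cycle_vec E tail head T a = fund_cycle a"
  unfolding cycle_vec_def
proof (rule the_equality)
  show "(\<forall>e. fund_cycle a e \<in> {-1, 0, 1}) \<and> (\<forall>e. e \<notin> T \<union> {a} \<longrightarrow> fund_cycle a e = 0)
      \<and> fund_cycle a a = 1 \<and> (\<forall>v. boundary E tail head (fund_cycle a) v = 0)"
    using boundary_fund_cycle[OF a] by (auto simp: fund_cycle_def side_def)
next
  fix c assume c: "(\<forall>e. c e \<in> {-1, 0, 1}) \<and> (\<forall>e. e \<notin> T \<union> {a} \<longrightarrow> c e = 0) \<and> c a = 1
      \<and> (\<forall>v. boundary E tail head c v = 0)"
  define x where "x e = c e - fund_cycle a e" for e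
  have supp: "x e = 0" if "e \<notin> T" for e using c that unfolding x_def fund_cycle_def by auto
  have bd: "boundary E tail head x v = 0" for v
    using c boundary_fund_cycle[OF a, of v] unfolding boundary_def x_def
    by (simp add: sum_subtractf left_diff_distrib)
  show "c = fund_cycle a"
  proof
    fix e show "c e = fund_cycle a e"
      using supp[of e] cycle_supported_on_T_vanishes[OF supp bd, of e] unfolding x_def
      by (cases "e \<in> T") auto
  qed
qed

lemma cocycle_vec_side: "cocycle_vec V tail head T \<mu> e = side \<mu> (tail e) - side \<mu> (head e)"
  unfolding cocycle_vec_def side_def Let_def by auto

lemma cocycle_vec_tree:
  "\<mu> \<in> T \<Longrightarrow> e \<in> T \<Longrightarrow> cocycle_vec V tail head T \<mu> e = (if e = \<mu> then 1 else 0)"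
  unfolding cocycle_vec_side using side_tail side_head side_same by auto

lemma cocycle_vec_chord:
  "\<mu> \<in> T \<Longrightarrow> e \<notin> T \<Longrightarrow> cocycle_vec V tail head T \<mu> e = - fund_cycle e \<mu>"
  unfolding cocycle_vec_side fund_cycle_def by auto

lemma fund_cycle_inner:
  assumes a: "a \<notin> T" "a \<in> E" and a': "a' \<notin> T"
  shows "einner E (fund_cycle a) (fund_cycle a')
    = (if a = a' then 1 else 0) + (\<Sum>\<mu>\<in>T. fund_cycle a \<mu> * fund_cycle a' \<mu>)"
proof -
  let ?\<delta> = "if a = a' then 1 else 0 :: real"
  have split: "fund_cycle a e * fund_cycle a' e = (if e = a then ?\<delta> else 0)
      + (if e \<in> T then fund_cycle a e * fund_cycle a' e else 0)" for e
    using a a' unfolding fund_cycle_def by auto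
  have "einner E (fund_cycle a) (fund_cycle a') = (\<Sum>e\<in>E. (if e = a then ?\<delta> else 0)
      + (if e \<in> T then fund_cycle a e * fund_cycle a' e else 0))"
    unfolding einner_def by (rule sum.cong[OF refl split])
  also have "\<dots> = (\<Sum>e\<in>E. if e = a then ?\<delta> else 0)
      + (\<Sum>e\<in>E. if e \<in> T then fund_cycle a e * fund_cycle a' e else 0)"
    by (rule sum.distrib)
  also have "(\<Sum>e\<in>E. if e = a then ?\<delta> else 0) = ?\<delta>" using a finite_E by simp
  also have "(\<Sum>e\<in>E. if e \<in> T then fund_cycle a e * fund_cycle a' e else 0)
      = (\<Sum>\<mu>\<in>T. fund_cycle a \<mu> * fund_cycle a' \<mu>)"
    using sum.inter_restrict[OF finite_E, of "\<lambda>e. fund_cycle a e * fund_cycle a' e" T] T_sub_E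
    by (simp add: Int_absorb1)
  finally show ?thesis .
qed

lemma cocycle_vec_inner:
  assumes \<mu>: "\<mu> \<in> T" and \<mu>': "\<mu>' \<in> T"
  shows "einner E (cocycle_vec V tail head T \<mu>) (cocycle_vec V tail head T \<mu>')
    = (if \<mu> = \<mu>' then 1 else 0) + (\<Sum>a\<in>E - T. fund_cycle a \<mu> * fund_cycle a \<mu>')"
proof -
  let ?k = "cocycle_vec V tail head T"
  let ?\<delta> = "if \<mu> = \<mu>' then 1 else 0 :: real"
  have split: "?k \<mu> e * ?k \<mu>' e = (if e \<in> T then (if e = \<mu> then ?\<delta> else 0)
      else fund_cycle e \<mu> * fund_cycle e \<mu>')" for e
    using cocycle_vec_tree[OF \<mu>, of e] cocycle_vec_tree[OF \<mu>', of e]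
      cocycle_vec_chord[OF \<mu>, of e] cocycle_vec_chord[OF \<mu>', of e] by auto
  have "einner E (?k \<mu>) (?k \<mu>') = (\<Sum>e\<in>E. if e \<in> T then (if e = \<mu> then ?\<delta> else 0)
      else fund_cycle e \<mu> * fund_cycle e \<mu>')"
    unfolding einner_def by (rule sum.cong[OF refl split])
  also have "\<dots> = (\<Sum>e\<in>T. if e = \<mu> then ?\<delta> else 0)
      + (\<Sum>a\<in>E - T. fund_cycle a \<mu> * fund_cycle a \<mu>')"
    using sum.If_cases[OF finite_E, of "\<lambda>e. e \<in> T" "\<lambda>e. if e = \<mu> then ?\<delta> else 0"
        "\<lambda>a. fund_cycle a \<mu> * fund_cycle a \<mu>'"] T_sub_E
    by (simp add: Int_absorb1 Diff_eq)
  also have "(\<Sum>e\<in>T. if e = \<mu> then ?\<delta> else 0) = ?\<delta>" using \<mu> finite_T by simp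
  finally show ?thesis .
qed

definition cycle_matrix :: "'e list \<Rightarrow> 'e list \<Rightarrow> real mat" where
  "cycle_matrix cs ds = mat (length ds) (length cs) (\<lambda>(i, j). fund_cycle (cs ! j) (ds ! i))"

lemma cycle_matrix_carrier: "cycle_matrix cs ds \<in> carrier_mat (length ds) (length cs)"
  unfolding cycle_matrix_def by auto

lemma cycle_matrix_index:
  "i < length ds \<Longrightarrow> j < length cs \<Longrightarrow> cycle_matrix cs ds $$ (i, j) = fund_cycle (cs ! j) (ds ! i)"
  unfolding cycle_matrix_def by simp

lemma cycle_KS_gram:
  assumes cs: "distinct cs" "set cs = E - T" and ds: "distinct ds" "set ds = T"
  defines "A \<equiv> cycle_matrix cs ds"
  shows "cycle_KS E tail head T cs = 1\<^sub>m (length cs) + A\<^sup>T * A"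
proof (rule eq_matI)
  have A: "A \<in> carrier_mat (length ds) (length cs)" unfolding A_def by (rule cycle_matrix_carrier)
  fix j j' assume "j < dim_row (1\<^sub>m (length cs) + A\<^sup>T * A)" "j' < dim_col (1\<^sub>m (length cs) + A\<^sup>T * A)"
  hence j: "j < length cs" and j': "j' < length cs" using A by auto
  have chords: "cs ! j \<in> E - T" "cs ! j' \<in> E - T" using j j' cs(2) nth_mem by blast+
  have "cycle_KS E tail head T cs $$ (j, j') = einner E (fund_cycle (cs ! j)) (fund_cycle (cs ! j'))"
    unfolding cycle_KS_def using j j' chords cycle_vec_eq_fund_cycle by auto
  also have "\<dots> = (if j = j' then 1 else 0) + (\<Sum>i<length ds. A $$ (i, j) * A $$ (i, j'))"
    using fund_cycle_inner[of "cs ! j" "cs ! j'"] chords nth_eq_iff_index_eq[OF cs(1) j j']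
      sum_distinct_list_nth[OF ds(1)] ds(2) cycle_matrix_index j j' unfolding A_def by auto
  also have "\<dots> = (1\<^sub>m (length cs) + A\<^sup>T * A) $$ (j, j')"
    using j j' A by (auto simp: scalar_prod_def lessThan_atLeast0)
  finally show "cycle_KS E tail head T cs $$ (j, j') = (1\<^sub>m (length cs) + A\<^sup>T * A) $$ (j, j')" .
qed (auto simp: cycle_KS_def A_def cycle_matrix_def)

lemma cocycle_KS_gram:
  assumes cs: "distinct cs" "set cs = E - T" and ds: "distinct ds" "set ds = T"
  defines "A \<equiv> cycle_matrix cs ds"
  shows "cocycle_KS V E tail head T ds = 1\<^sub>m (length ds) + A * A\<^sup>T"
proof (rule eq_matI)
  have A: "A \<in> carrier_mat (length ds) (length cs)" unfolding A_def by (rule cycle_matrix_carrier)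
  fix i i' assume "i < dim_row (1\<^sub>m (length ds) + A * A\<^sup>T)" "i' < dim_col (1\<^sub>m (length ds) + A * A\<^sup>T)"
  hence i: "i < length ds" and i': "i' < length ds" using A by auto
  have tree_edges: "ds ! i \<in> T" "ds ! i' \<in> T" using i i' ds(2) nth_mem by blast+
  have "cocycle_KS V E tail head T ds $$ (i, i')
      = einner E (cocycle_vec V tail head T (ds ! i)) (cocycle_vec V tail head T (ds ! i'))"
    unfolding cocycle_KS_def using i i' by auto
  also have "\<dots> = (if i = i' then 1 else 0) + (\<Sum>j<length cs. A $$ (i, j) * A $$ (i', j))"
    using cocycle_vec_inner[OF tree_edges] nth_eq_iff_index_eq[OF ds(1) i i']
      sum_distinct_list_nth[OF cs(1)] cs(2) cycle_matrix_index i i' unfolding A_def by auto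
  also have "\<dots> = (1\<^sub>m (length ds) + A * A\<^sup>T) $$ (i, i')"
    using i i' A by (auto simp: scalar_prod_def lessThan_atLeast0)
  finally show "cocycle_KS V E tail head T ds $$ (i, i') = (1\<^sub>m (length ds) + A * A\<^sup>T) $$ (i, i')" .
qed (auto simp: cocycle_KS_def A_def cycle_matrix_def)

lemma enumeration_lengths:
  assumes cs: "distinct cs" "set cs = E - T" and ds: "distinct ds" "set ds = T"
  shows "length ds + 1 = card V" and "length cs + length ds = card E"
proof -
  have "card V \<ge> 1" using graph unfolding graph_def by (simp add: Suc_le_eq card_gt_0_iff)
  thus "length ds + 1 = card V" using distinct_card[OF ds(1)] ds(2) card_T by simp
  show "length cs + length ds = card E"
    using distinct_card[OF cs(1)] distinct_card[OF ds(1)] cs(2) ds(2) finite_T T_sub_E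
      card_Diff_subset[OF finite_T T_sub_E] card_mono[OF finite_E T_sub_E] by simp
qed

end

theorem theorem5:
  fixes V :: "'v set" and E :: "'e set" and tail head :: "'e \<Rightarrow> 'v"
    and T :: "'e set" and cs ds :: "'e list"
  assumes G: "graph V E tail head"
    and conn: "connected_on V E tail head"
    and ST: "spanning_tree V E tail head T"
    and cs: "distinct cs" "set cs = E - T"
    and ds: "distinct ds" "set ds = T"
  defines "K \<equiv> cycle_KS E tail head T cs"
    and "sK \<equiv> cocycle_KS V E tail head T ds"
  shows "(\<forall>k. eigenvalue K k \<longrightarrow> k \<ge> 1)
    \<and> (\<forall>k. eigenvalue sK k \<longrightarrow> k \<ge> 1)
    \<and> (\<forall>k > 1. (eigenvalue K k \<longleftrightarrow> eigenvalue sK k) \<and> eig_mult K k = eig_mult sK k)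
    \<and> int (eig_mult K 1) - int (eig_mult sK 1)
        = (int (card E) - int (card V) + 1) - (int (card V) - 1)
    \<and> (card E = 2 * card V - 2 \<longrightarrow> char_poly K = char_poly sK \<and> similar_mat K sK)"
proof -
  interpret spanning_tree_graph V E tail head T using G ST by unfold_locales
  define A where "A = cycle_matrix cs ds"
  have A: "A \<in> carrier_mat (length ds) (length cs)" unfolding A_def by (rule cycle_matrix_carrier)
  have K: "K = 1\<^sub>m (length cs) + A\<^sup>T * A"
    unfolding K_def A_def by (rule cycle_KS_gram[OF cs ds])
  have sK: "sK = 1\<^sub>m (length ds) + A * A\<^sup>T"
    unfolding sK_def A_def by (rule cocycle_KS_gram[OF cs ds])
  note lengths = enumeration_lengths[OF cs ds]
  note spectra = one_plus_gram_spectra[OF A, folded K sK]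
  have "int (length cs) - int (length ds) = (int (card E) - int (card V) + 1) - (int (card V) - 1)"
    using lengths by linarith
  moreover have "card E = 2 * card V - 2 \<Longrightarrow> length cs = length ds" using lengths by linarith
  ultimately show ?thesis using spectra by auto
qed

end
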